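(* Let $G$ be a finite simple graph that is self-complementary, i.e., isomorphic to its complement $\overline G$. Then every probability assignment $\vec p$ for $G$ is either self-consistent, or inconsistent with some self-consistent probability assignment $\vec q$ for $G$.
   Context: Let $V(G)=\{1,\dots,m\}$. A probability assignment for $G$ is a vector $\vec p=(p_i)_{i\in V(G)}\in[0,1]^{V(G)}$ with $p_i+p_j\le 1$ whenever $\{i,j\}$ is an edge of $G$. The OR product $G\ast G'$ has vertex set $V(G)\times V(G')$, with $(i,i')$ and $(j,j')$ adjacent iff $\{i,j\}\in E(G)$ or $\{i',j'\}\in E(G')$; $G^{\ast n}$ denotes the OR product of $n$ copies of $G$. A clique is a set of pairwise adjacent vertices. For vectors $\vec p,\vec q$ indexed by $V(G)$, $\vec p\otimes\vec q$ is the vector indexed by $V(G)\times V(G)$ with entries $p_iq_j$, and $\vec p^{\,\otimes n}$ has entries $p_{i_1}\cdots p_{i_n}$. A probability assignment $\vec p$ for $G$ is self-consistent if for every $n\ge 1$ and every clique $C$ of $G^{\ast n}$ one has $\sum_{(i_1,\dots,i_n)\in C}p_{i_1}\cdots p_{i_n}\le 1$; otherwise it is self-inconsistent. A probability assignment $\vec p$ for $G$ is inconsistent with a self-consistent probability assignment $\vec q$ for $G$ if there is a clique $C$ of $G\ast G$ with $\sum_{(i,j)\in C}p_iq_j>1$. *)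

theory Defs
  imports Complex_Main
begin

definition simple_graph :: "'a set \<Rightarrow> ('a \<Rightarrow> 'a \<Rightarrow> bool) \<Rightarrow> bool" where
  "simple_graph V E \<longleftrightarrow> finite V \<and> (\<forall>x y. E x y \<longrightarrow> x \<in> V \<and> y \<in> V)
     \<and> (\<forall>x y. E x y \<longrightarrow> E y x) \<and> (\<forall>x. \<not> E x x)"

definition compl_edges :: "'a set \<Rightarrow> ('a \<Rightarrow> 'a \<Rightarrow> bool) \<Rightarrow> 'a \<Rightarrow> 'a \<Rightarrow> bool" where
  "compl_edges V E x y \<longleftrightarrow> x \<in> V \<and> y \<in> V \<and> x \<noteq> y \<and> \<not> E x y"

definition graph_iso :: "'a set \<Rightarrow> ('a \<Rightarrow> 'a \<Rightarrow> bool) \<Rightarrow> 'a set \<Rightarrow> ('a \<Rightarrow> 'a \<Rightarrow> bool) \<Rightarrow> bool" where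
  "graph_iso V E W F \<longleftrightarrow> (\<exists>f. bij_betw f V W \<and> (\<forall>x\<in>V. \<forall>y\<in>V. E x y \<longleftrightarrow> F (f x) (f y)))"

definition self_complementary :: "'a set \<Rightarrow> ('a \<Rightarrow> 'a \<Rightarrow> bool) \<Rightarrow> bool" where
  "self_complementary V E \<longleftrightarrow> graph_iso V E V (compl_edges V E)"

definition prob_assignment :: "'a set \<Rightarrow> ('a \<Rightarrow> 'a \<Rightarrow> bool) \<Rightarrow> ('a \<Rightarrow> real) \<Rightarrow> bool" where
  "prob_assignment V E p \<longleftrightarrow> (\<forall>i\<in>V. 0 \<le> p i \<and> p i \<le> 1)
     \<and> (\<forall>i j. E i j \<longrightarrow> p i + p j \<le> 1)"

definition or_pow_vertices :: "'a set \<Rightarrow> nat \<Rightarrow> 'a list set" where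
  "or_pow_vertices V n = {xs. length xs = n \<and> set xs \<subseteq> V}"

definition or_pow_adj :: "('a \<Rightarrow> 'a \<Rightarrow> bool) \<Rightarrow> 'a list \<Rightarrow> 'a list \<Rightarrow> bool" where
  "or_pow_adj E xs ys \<longleftrightarrow> (\<exists>k < min (length xs) (length ys). E (xs ! k) (ys ! k))"

definition is_clique_or_pow :: "'a set \<Rightarrow> ('a \<Rightarrow> 'a \<Rightarrow> bool) \<Rightarrow> nat \<Rightarrow> 'a list set \<Rightarrow> bool" where
  "is_clique_or_pow V E n C \<longleftrightarrow> C \<subseteq> or_pow_vertices V n
     \<and> (\<forall>x\<in>C. \<forall>y\<in>C. x \<noteq> y \<longrightarrow> or_pow_adj E x y)"

definition self_consistent :: "'a set \<Rightarrow> ('a \<Rightarrow> 'a \<Rightarrow> bool) \<Rightarrow> ('a \<Rightarrow> real) \<Rightarrow> bool" where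
  "self_consistent V E p \<longleftrightarrow> prob_assignment V E p \<and>
     (\<forall>n\<ge>1. \<forall>C. is_clique_or_pow V E n C \<longrightarrow> (\<Sum>xs\<in>C. prod_list (map p xs)) \<le> 1)"

definition or_adj2 :: "('a \<Rightarrow> 'a \<Rightarrow> bool) \<Rightarrow> 'a \<times> 'a \<Rightarrow> 'a \<times> 'a \<Rightarrow> bool" where
  "or_adj2 E u v \<longleftrightarrow> E (fst u) (fst v) \<or> E (snd u) (snd v)"

definition is_clique_or2 :: "'a set \<Rightarrow> ('a \<Rightarrow> 'a \<Rightarrow> bool) \<Rightarrow> ('a \<times> 'a) set \<Rightarrow> bool" where
  "is_clique_or2 V E C \<longleftrightarrow> C \<subseteq> V \<times> V \<and> (\<forall>u\<in>C. \<forall>v\<in>C. u \<noteq> v \<longrightarrow> or_adj2 E u v)"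

definition inconsistent_with :: "'a set \<Rightarrow> ('a \<Rightarrow> 'a \<Rightarrow> bool) \<Rightarrow> ('a \<Rightarrow> real) \<Rightarrow> ('a \<Rightarrow> real) \<Rightarrow> bool" where
  "inconsistent_with V E p q \<longleftrightarrow>
     (\<exists>C. is_clique_or2 V E C \<and> (\<Sum>(i,j)\<in>C. p i * q j) > 1)"

end

theory Submission
  imports Defs "HOL-Analysis.Analysis"
begin

(* Let theta(p) be the maximum of sum_ij sqrt(p_i) sqrt(p_j) Y_ij over density matrices Y
   (positive semidefinite, trace 1) vanishing on the non-edges of G.

   If theta(p) <= 1, semidefinite duality (obtained from the first-order condition at a
   minimiser of a quadratic penalty over the compact convex set of density matrices) gives, for
   every eps > 0, a positive semidefinite matrix whose Gram vectors, extended by the coordinate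
   sqrt(p_i), form an orthogonal representation of G in which p_i / (1 + eps) is the squared
   projection onto a fixed unit vector. Tensor powers of such a representation and Bessel's
   inequality bound every clique sum of the OR powers, so p is self-consistent.

   If theta(p) > 1, a Gram factorisation of a witnessing Y is an orthogonal representation of the
   complement of G. Transported along an isomorphism onto the complement it yields a self-consistent
   q, and the graph of the inverse isomorphism is a clique of G * G on which, by Cauchy-Schwarz,
   sum p_i q_j > 1. *)

definition inner_on :: "'d set \<Rightarrow> ('d \<Rightarrow> real) \<Rightarrow> ('d \<Rightarrow> real) \<Rightarrow> real" where
  "inner_on D x y = (\<Sum>d\<in>D. x d * y d)"

lemma inner_on_self_nonneg: "0 \<le> inner_on D x x"
  by (simp add: inner_on_def sum_nonneg)

lemma inner_on_self_eq_0_iff: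
  "finite D \<Longrightarrow> inner_on D x x = 0 \<longleftrightarrow> (\<forall>d\<in>D. x d = 0)"
  by (simp add: inner_on_def sum_nonneg_eq_0_iff)

lemma inner_on_divide: "inner_on D (\<lambda>d. f d / a) (\<lambda>d. g d / b) = inner_on D f g / (a * b)"
  by (simp add: inner_on_def sum_divide_distrib)

lemma bessel_inequality:
  assumes "finite L"
    and norm_le: "\<And>x. x \<in> L \<Longrightarrow> inner_on I (U x) (U x) \<le> 1"
    and orth: "\<And>x y. x \<in> L \<Longrightarrow> y \<in> L \<Longrightarrow> x \<noteq> y \<Longrightarrow> inner_on I (U x) (U y) = 0"
  shows "(\<Sum>x\<in>L. (inner_on I c (U x))\<^sup>2) \<le> inner_on I c c"
proof -
  define a where "a x = inner_on I c (U x)" for x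
  define S where "S i = (\<Sum>x\<in>L. a x * U x i)" for i
  have "(\<Sum>i\<in>I. c i * S i) = (\<Sum>x\<in>L. a x * (\<Sum>i\<in>I. c i * U x i))"
    unfolding S_def by (simp add: sum_distrib_left sum_distrib_right algebra_simps sum.swap[of _ I])
  also have "\<dots> = (\<Sum>x\<in>L. (a x)\<^sup>2)" by (simp add: a_def inner_on_def power2_eq_square)
  finally have cross: "(\<Sum>i\<in>I. c i * S i) = (\<Sum>x\<in>L. (a x)\<^sup>2)" .
  have "(\<Sum>i\<in>I. S i * S i) = (\<Sum>x\<in>L. \<Sum>y\<in>L. a x * a y * inner_on I (U x) (U y))"
    unfolding S_def inner_on_def
    by (simp add: sum_distrib_left sum_distrib_right algebra_simps sum.swap[of _ I])
  also have "\<dots> = (\<Sum>x\<in>L. (a x)\<^sup>2 * inner_on I (U x) (U x))"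
  proof (rule sum.cong[OF refl])
    fix x assume x: "x \<in> L"
    have "(\<Sum>y\<in>L - {x}. a x * a y * inner_on I (U x) (U y)) = 0"
      using orth[OF x] by (intro sum.neutral) auto
    then show "(\<Sum>y\<in>L. a x * a y * inner_on I (U x) (U y)) = (a x)\<^sup>2 * inner_on I (U x) (U x)"
      by (simp add: sum.remove[OF assms(1) x] power2_eq_square)
  qed
  also have "\<dots> \<le> (\<Sum>x\<in>L. (a x)\<^sup>2)"
    by (rule sum_mono) (simp add: mult_left_le norm_le)
  finally have squares: "(\<Sum>i\<in>I. S i * S i) \<le> (\<Sum>x\<in>L. (a x)\<^sup>2)" .
  have "0 \<le> (\<Sum>i\<in>I. (c i - S i)\<^sup>2)" by (simp add: sum_nonneg)
  also have "\<dots> = inner_on I c c - 2 * (\<Sum>i\<in>I. c i * S i) + (\<Sum>i\<in>I. S i * S i)"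
    by (simp add: inner_on_def power2_eq_square algebra_simps sum.distrib sum_subtractf
        sum_distrib_left)
  finally show ?thesis using cross squares unfolding a_def by linarith
qed

text \<open>Coordinates of the tensor product \<open>u x\<^sub>1 \<otimes> \<dots> \<otimes> u x\<^sub>n\<close>, indexed by lists of
  coordinates; lists of different lengths give the junk value 0.\<close>
fun tensor :: "('a \<Rightarrow> 'd \<Rightarrow> real) \<Rightarrow> 'a list \<Rightarrow> 'd list \<Rightarrow> real" where
  "tensor u [] [] = 1"
| "tensor u (x # xs) (k # ks) = u x k * tensor u xs ks"
| "tensor u _ _ = 0"

lemma lists_length_Suc_eq:
  "{ks. length ks = Suc m \<and> set ks \<subseteq> D}
     = (\<lambda>(k, ks). k # ks) ` (D \<times> {ks. length ks = m \<and> set ks \<subseteq> D})"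
proof (intro set_eqI iffI)
  fix ks assume "ks \<in> {ks. length ks = Suc m \<and> set ks \<subseteq> D}"
  then show "ks \<in> (\<lambda>(k, ks). k # ks) ` (D \<times> {ks. length ks = m \<and> set ks \<subseteq> D})"
    by (cases ks) auto
qed auto

lemma inner_on_tensor:
  assumes "length xs = n" "length ys = n"
  shows "inner_on {ks. length ks = n \<and> set ks \<subseteq> D} (tensor u xs) (tensor v ys)
           = prod_list (map2 (\<lambda>x y. inner_on D (u x) (v y)) xs ys)"
  using assms
proof (induction n arbitrary: xs ys)
  case 0
  have "{ks. length ks = 0 \<and> set ks \<subseteq> D} = {[]}" by auto
  with 0 show ?case by (simp add: inner_on_def)
next
  case (Suc n)
  then obtain x xs' y ys' where xs: "xs = x # xs'" and ys: "ys = y # ys'"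
    and len: "length xs' = n" "length ys' = n"
    by (cases xs; cases ys) auto
  let ?K = "{ks. length ks = n \<and> set ks \<subseteq> D}"
  have inj: "inj_on (\<lambda>(k, ks). k # ks) (D \<times> ?K)"
    by (auto simp: inj_on_def)
  have "inner_on {ks. length ks = Suc n \<and> set ks \<subseteq> D} (tensor u xs) (tensor v ys)
      = (\<Sum>(k, ks)\<in>D \<times> ?K. (u x k * v y k) * (tensor u xs' ks * tensor v ys' ks))"
    unfolding inner_on_def lists_length_Suc_eq sum.reindex[OF inj]
    by (simp add: xs ys case_prod_beta mult_ac)
  also have "\<dots> = inner_on D (u x) (v y) * inner_on ?K (tensor u xs') (tensor v ys')"
    unfolding inner_on_def sum.cartesian_product[symmetric] sum_product ..
  finally show ?case using Suc.IH[OF len] by (simp add: xs ys)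
qed

definition orth_rep :: "'d set \<Rightarrow> 'a set \<Rightarrow> ('a \<Rightarrow> 'a \<Rightarrow> bool) \<Rightarrow> ('a \<Rightarrow> 'd \<Rightarrow> real) \<Rightarrow> bool"
  where "orth_rep D V F u \<longleftrightarrow> (\<forall>i\<in>V. inner_on D (u i) (u i) \<le> 1)
           \<and> (\<forall>i\<in>V. \<forall>j\<in>V. F i j \<longrightarrow> inner_on D (u i) (u j) = 0)"

lemma prod_list_map_power2: "(prod_list (map f xs))\<^sup>2 = prod_list (map (\<lambda>x. (f x :: real)\<^sup>2) xs)"
  by (induction xs) (auto simp: power_mult_distrib)

lemma prod_list_le_1:
  "(\<And>x. x \<in> set xs \<Longrightarrow> 0 \<le> f x \<and> f x \<le> (1::real)) \<Longrightarrow> prod_list (map f xs) \<le> 1"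
proof -
  assume "\<And>x. x \<in> set xs \<Longrightarrow> 0 \<le> f x \<and> f x \<le> 1"
  then have "0 \<le> prod_list (map f xs) \<and> prod_list (map f xs) \<le> 1"
    by (induction xs) (auto intro: mult_le_one)
  then show ?thesis ..
qed

lemma finite_or_pow_vertices: "finite V \<Longrightarrow> finite (or_pow_vertices V n)"
  using finite_lists_length_eq[of V n] by (simp add: or_pow_vertices_def conj_commute)

lemma orth_rep_tensor_orthogonal:
  assumes u: "orth_rep D V F u" and xs: "xs \<in> or_pow_vertices V n" and ys: "ys \<in> or_pow_vertices V n"
    and adj: "or_pow_adj F xs ys"
  shows "inner_on {ks. length ks = n \<and> set ks \<subseteq> D} (tensor u xs) (tensor u ys) = 0"
proof -
  have len: "length xs = n" "length ys = n" and "set xs \<subseteq> V" "set ys \<subseteq> V"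
    using xs ys by (auto simp: or_pow_vertices_def)
  obtain k where k: "k < n" "F (xs ! k) (ys ! k)"
    using adj len by (auto simp: or_pow_adj_def)
  have "xs ! k \<in> V" "ys ! k \<in> V"
    using k(1) len \<open>set xs \<subseteq> V\<close> \<open>set ys \<subseteq> V\<close> by (auto dest: nth_mem)
  then have "map2 (\<lambda>x y. inner_on D (u x) (u y)) xs ys ! k = 0"
    using k u len by (simp add: orth_rep_def)
  moreover have "k < length (map2 (\<lambda>x y. inner_on D (u x) (u y)) xs ys)"
    using k(1) len by simp
  ultimately have "0 \<in> set (map2 (\<lambda>x y. inner_on D (u x) (u y)) xs ys)"
    by (metis nth_mem)
  then show ?thesis
    using len by (simp add: inner_on_tensor prod_list_zero_iff)
qed

text \<open>The tensor powers of an orthogonal representation of \<open>F\<close> are pairwise orthogonal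
  along every clique of the OR power, so Bessel's inequality for the tensor power of
  \<open>c\<close> bounds the clique sums.\<close>
lemma orth_rep_clique_bound:
  assumes "finite V" and u: "orth_rep D V F u" and c: "inner_on D c c \<le> 1"
    and L: "is_clique_or_pow V F n L"
  shows "(\<Sum>xs\<in>L. prod_list (map (\<lambda>i. (inner_on D c (u i))\<^sup>2) xs)) \<le> 1"
proof -
  let ?K = "{ks. length ks = n \<and> set ks \<subseteq> D}"
  have L_sub: "L \<subseteq> or_pow_vertices V n"
    using L by (simp add: is_clique_or_pow_def)
  then have fin_L: "finite L"
    using finite_or_pow_vertices[OF assms(1)] by (rule finite_subset)
  have len: "length xs = n" and set: "set xs \<subseteq> V" if "xs \<in> L" for xs
    using L_sub that by (auto simp: or_pow_vertices_def)
  define cs where "cs = tensor (\<lambda>_. c) (replicate n undefined)"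
  have c_tensor: "inner_on ?K cs (tensor u xs) = prod_list (map (\<lambda>i. inner_on D c (u i)) xs)"
    if "length xs = n" for xs
    unfolding cs_def using that
    by (simp add: inner_on_tensor zip_replicate1 comp_def del: replicate.simps)
  have "(\<Sum>xs\<in>L. (inner_on ?K cs (tensor u xs))\<^sup>2) \<le> inner_on ?K cs cs"
  proof (rule bessel_inequality[OF fin_L])
    fix xs assume xs: "xs \<in> L"
    have "inner_on ?K (tensor u xs) (tensor u xs) = prod_list (map (\<lambda>i. inner_on D (u i) (u i)) xs)"
      using len[OF xs] by (simp add: inner_on_tensor zip_same_conv_map comp_def)
    also have "\<dots> \<le> 1"
      using u set[OF xs] inner_on_self_nonneg by (intro prod_list_le_1) (auto simp: orth_rep_def)
    finally show "inner_on ?K (tensor u xs) (tensor u xs) \<le> 1" .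
  next
    fix xs ys assume "xs \<in> L" "ys \<in> L" "xs \<noteq> ys"
    then show "inner_on ?K (tensor u xs) (tensor u ys) = 0"
      using L L_sub by (intro orth_rep_tensor_orthogonal[OF u]) (auto simp: is_clique_or_pow_def)
  qed
  also have "inner_on ?K cs cs = (inner_on D c c) ^ n"
    unfolding cs_def by (simp add: inner_on_tensor zip_replicate1 comp_def del: replicate.simps)
  also have "\<dots> \<le> 1"
    using c inner_on_self_nonneg by (rule power_le_one[rotated])
  finally show ?thesis
    using c_tensor len by (simp add: prod_list_map_power2)
qed

lemma orth_rep_self_consistent:
  assumes G: "simple_graph V F" and u: "orth_rep D V F u" and c: "inner_on D c c \<le> 1"
  shows "self_consistent V F (\<lambda>i. (inner_on D c (u i))\<^sup>2)"
proof -
  have fin: "finite V" using G by (simp add: simple_graph_def)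
  note bound = orth_rep_clique_bound[OF fin u c]
  have "(inner_on D c (u i))\<^sup>2 \<le> 1" if "i \<in> V" for i
    using that bound[of 1 "{[i]}"]
    by (simp add: is_clique_or_pow_def or_pow_vertices_def)
  moreover have "(inner_on D c (u i))\<^sup>2 + (inner_on D c (u j))\<^sup>2 \<le> 1" if "F i j" for i j
  proof -
    have "i \<noteq> j" "i \<in> V" "j \<in> V" "F j i"
      using that G by (auto simp: simple_graph_def)
    with that show ?thesis
      using bound[of 1 "{[i], [j]}"]
      by (simp add: is_clique_or_pow_def or_pow_vertices_def or_pow_adj_def)
  qed
  ultimately show ?thesis
    using bound by (auto simp: self_consistent_def prob_assignment_def)
qed

definition quad_form :: "'a set \<Rightarrow> ('a \<Rightarrow> 'a \<Rightarrow> real) \<Rightarrow> ('a \<Rightarrow> real) \<Rightarrow> real" where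
  "quad_form V Y z = (\<Sum>i\<in>V. \<Sum>j\<in>V. z i * z j * Y i j)"

definition psd_on :: "'a set \<Rightarrow> ('a \<Rightarrow> 'a \<Rightarrow> real) \<Rightarrow> bool" where
  "psd_on V Y \<longleftrightarrow> (\<forall>i j. Y i j = Y j i) \<and> (\<forall>z. 0 \<le> quad_form V Y z)"

lemma quad_form_insert:
  assumes "finite V" "v \<notin> V" and sym: "\<And>i j. Y i j = Y j i"
  shows "quad_form (insert v V) Y (z(v := t))
           = Y v v * t\<^sup>2 + 2 * t * (\<Sum>j\<in>V. Y v j * z j) + quad_form V Y z"
proof -
  let ?z = "z(v := t)"
  have on_V: "(\<Sum>j\<in>V. f j * ?z j) = (\<Sum>j\<in>V. f j * z j)"
    and on_V': "(\<Sum>j\<in>V. ?z j * f j) = (\<Sum>j\<in>V. z j * f j)" for f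
    using assms(2) by (auto intro: sum.cong)
  have row: "(\<Sum>j\<in>insert v V. ?z i * ?z j * Y i j) = ?z i * (t * Y i v + (\<Sum>j\<in>V. Y i j * z j))"
    for i
    using assms(1,2) on_V[of "\<lambda>j. ?z i * Y i j"]
    by (simp add: sum_distrib_left mult_ac del: fun_upd_apply)
      (simp add: sum_distrib_left algebra_simps)
  have "quad_form (insert v V) Y ?z
      = t * (t * Y v v + (\<Sum>j\<in>V. Y v j * z j))
        + (\<Sum>i\<in>V. z i * (t * Y i v + (\<Sum>j\<in>V. Y i j * z j)))"
    unfolding quad_form_def row using assms(1,2) on_V' by simp
  also have "(\<Sum>i\<in>V. z i * (t * Y i v + (\<Sum>j\<in>V. Y i j * z j)))
      = t * (\<Sum>j\<in>V. Y v j * z j) + quad_form V Y z"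
    by (simp add: quad_form_def algebra_simps sum.distrib sum_distrib_left sym[of _ v])
  finally show ?thesis by (simp add: power2_eq_square algebra_simps del: fun_upd_apply)
qed

lemma psd_on_diag_nonneg:
  assumes "finite V" "psd_on V Y" "v \<in> V"
  shows "0 \<le> Y v v"
proof -
  have "quad_form V Y (\<lambda>i. if i = v then 1 else 0)
      = (\<Sum>i\<in>V. if i = v then (\<Sum>j\<in>V. if j = v then Y i j else 0) else 0)"
    unfolding quad_form_def by (intro sum.cong) (auto intro: sum.cong)
  also have "\<dots> = Y v v" using assms(1,3) by simp
  finally show ?thesis using assms(2) by (metis psd_on_def)
qed

lemma psd_on_pivot_row_zero:
  assumes "finite V" "v \<notin> V" and psd: "psd_on (insert v V) Y"
    and "Y v v = 0" "j \<in> V"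
  shows "Y v j = 0"
proof (rule ccontr)
  assume ne: "Y v j \<noteq> 0"
  define z where "z k = (if k = j then 1 else 0 :: real)" for k
  define t where "t = - (quad_form V Y z + 1) / (2 * Y v j)"
  have "(\<Sum>k\<in>V. Y v k * z k) = Y v j"
    using assms(1,5) by (simp add: z_def if_distrib cong: if_cong)
  then have "quad_form (insert v V) Y (z(v := t)) = -1"
    using quad_form_insert[OF assms(1,2)] psd ne \<open>Y v v = 0\<close>
    by (simp add: psd_on_def t_def field_simps)
  with psd show False by (metis psd_on_def neg_0_le_iff_le not_one_le_zero)
qed

lemma psd_on_pivot_entry:
  assumes "finite V" "v \<notin> V" and psd: "psd_on (insert v V) Y"
    and "i \<in> insert v V" "j \<in> insert v V" "i = v \<or> j = v"
  shows "Y i j = Y i v * Y j v / Y v v"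
proof -
  have sym: "Y i j = Y j i" for i j using psd by (simp add: psd_on_def)
  show ?thesis
  proof (cases "Y v v = 0")
    case True
    then have "Y v k = 0" if "k \<in> insert v V" for k
      using that psd_on_pivot_row_zero[OF assms(1-3)] by auto
    then show ?thesis using assms(4-6) True sym[of i v] sym[of j v] by auto
  next
    case False
    then show ?thesis using assms(6) sym[of i v] sym[of j v] by auto
  qed
qed

lemma schur_complement_psd_on:
  assumes "finite V" "v \<notin> V" and psd: "psd_on (insert v V) Y"
  shows "psd_on V (\<lambda>i j. Y i j - Y i v * Y v j / Y v v)"
proof -
  define a where "a = Y v v"
  have sym: "Y i j = Y j i" for i j using psd by (simp add: psd_on_def)
  have ins: "quad_form (insert v V) Y (z(v := t))
      = a * t\<^sup>2 + 2 * t * (\<Sum>j\<in>V. Y v j * z j) + quad_form V Y z" for z t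
    unfolding a_def by (rule quad_form_insert[OF assms(1,2) sym])
  have nonneg: "0 \<le> quad_form (insert v V) Y w" for w
    using psd by (simp add: psd_on_def)
  have "0 \<le> quad_form V (\<lambda>i j. Y i j - Y i v * Y v j / a) z" for z
  proof -
    define b where "b = (\<Sum>j\<in>V. Y v j * z j)"
    have "quad_form V (\<lambda>i j. Y i j - Y i v * Y v j / a) z
        = quad_form V Y z - (\<Sum>i\<in>V. \<Sum>j\<in>V. (z i * Y i v) * (z j * Y v j) / a)"
      unfolding quad_form_def by (simp add: sum_subtractf algebra_simps)
    also have "(\<Sum>i\<in>V. \<Sum>j\<in>V. (z i * Y i v) * (z j * Y v j) / a) = b * b / a"
      unfolding b_def
      by (simp add: sum_distrib_left sum_distrib_right sum_divide_distrib sym[of _ v] algebra_simps)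
    also have "quad_form V Y z - b * b / a \<ge> 0"
    proof (cases "a = 0")
      case True
      then show ?thesis using ins[of z 0] nonneg[of "z(v := 0)"] by simp
    next
      case False
      then have "quad_form (insert v V) Y (z(v := - b / a)) = quad_form V Y z - b * b / a"
        using ins[of z "- b / a"] unfolding b_def[symmetric]
        by (simp add: field_simps power2_eq_square)
      then show ?thesis using nonneg by metis
    qed
    finally show ?thesis .
  qed
  then show ?thesis by (simp add: psd_on_def a_def sym mult.commute)
qed

text \<open>Induction on \<open>V\<close> by symmetric Gaussian elimination: the pivot row of \<open>Y\<close>
  becomes a new coordinate and the Schur complement is factored inductively. A zero pivot
  forces a zero pivot row, so the junk value \<open>x / 0 = 0\<close> keeps all formulas valid.\<close>
lemma psd_on_gram_factorization:
  assumes "finite V" "psd_on V Y"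
  shows "\<exists>x. \<forall>i\<in>V. \<forall>j\<in>V. Y i j = inner_on V (x i) (x j)"
  using assms
proof (induction V arbitrary: Y rule: finite_induct)
  case empty
  then show ?case by simp
next
  case (insert v V)
  let ?a = "Y v v"
  have sym: "Y i j = Y j i" for i j using insert.prems by (simp add: psd_on_def)
  obtain x' where x': "\<forall>i\<in>V. \<forall>j\<in>V. Y i j - Y i v * Y v j / ?a = inner_on V (x' i) (x' j)"
    using insert.IH schur_complement_psd_on[OF insert.hyps insert.prems] by blast
  define x where "x i k = (if k = v then Y i v / sqrt ?a else if i = v then 0 else x' i k)" for i k
  have a_nonneg: "0 \<le> ?a" using psd_on_diag_nonneg[OF _ insert.prems] insert.hyps(1) by simp
  have "Y i j = inner_on (insert v V) (x i) (x j)" if "i \<in> insert v V" "j \<in> insert v V" for i j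
  proof -
    have split: "inner_on (insert v V) (x i) (x j) = Y i v * Y j v / ?a + inner_on V (x i) (x j)"
      using insert.hyps a_nonneg by (simp add: inner_on_def x_def)
    show ?thesis
    proof (cases "i = v \<or> j = v")
      case True
      then have "inner_on V (x i) (x j) = 0"
        using insert.hyps(2) by (auto simp: inner_on_def x_def intro!: sum.neutral)
      then show ?thesis
        using split psd_on_pivot_entry[OF insert.hyps insert.prems that True] by simp
    next
      case False
      then have "inner_on V (x i) (x j) = inner_on V (x' i) (x' j)"
        using insert.hyps(2) by (auto simp: inner_on_def x_def intro!: sum.cong)
      moreover have "i \<in> V" "j \<in> V" using that False by auto
      ultimately have "Y i j - Y i v * Y v j / ?a = inner_on V (x' i) (x' j)"
        using x' by blast
      then show ?thesis using split \<open>inner_on V (x i) (x j) = _\<close> by (simp add: sym[of j v])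
    qed
  qed
  then show ?case by blast
qed

text \<open>Matrices are functions on pairs, vanishing off \<open>V \<times> V\<close>, so that they live in a product
  space. The entry bound follows from the other conditions; it is included only to make
  compactness immediate.\<close>
definition density_matrices :: "'a set \<Rightarrow> ('a \<times> 'a \<Rightarrow> real) set" where
  "density_matrices V = {Y. (\<forall>i j. Y (i, j) \<noteq> 0 \<longrightarrow> i \<in> V \<and> j \<in> V) \<and> (\<forall>ij. \<bar>Y ij\<bar> \<le> 1)
     \<and> psd_on V (curry Y) \<and> (\<Sum>i\<in>V. Y (i, i)) = 1}"

lemma compact_density_matrices: "compact (density_matrices V)"
proof -
  let ?S = "\<lambda>ij::'a \<times> 'a. if ij \<in> V \<times> V then {-1..1::real} else {0}"
  have "compactin (product_topology (\<lambda>_. euclidean) UNIV) (PiE UNIV ?S)"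
    unfolding compactin_PiE by auto
  then have "compact {Y. \<forall>ij. Y ij \<in> ?S ij}"
    unfolding euclidean_product_topology compactin_euclidean_iff PiE_UNIV_domain Pi_def by simp
  also have "{Y. \<forall>ij. Y ij \<in> ?S ij}
      = {Y. (\<forall>i j. Y (i, j) \<noteq> 0 \<longrightarrow> i \<in> V \<and> j \<in> V) \<and> (\<forall>ij. \<bar>Y ij\<bar> \<le> 1)}"
    by (force simp: abs_le_iff)
  finally have box: "compact \<dots>" .
  have "closed {Y :: 'a \<times> 'a \<Rightarrow> real. psd_on V (curry Y) \<and> (\<Sum>i\<in>V. Y (i, i)) = 1}"
    unfolding psd_on_def quad_form_def curry_def
    by (intro closed_Collect_conj closed_Collect_all closed_Collect_eq closed_Collect_le
        continuous_intros continuous_on_product_coordinates)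
  from compact_Int_closed[OF box this] show ?thesis
    by (simp add: density_matrices_def Int_def conj_assoc)
qed

lemma quad_form_convex_comb:
  "quad_form V (\<lambda>i j. (1 - t) * A i j + t * B i j) z
     = (1 - t) * quad_form V A z + t * quad_form V B z"
  unfolding quad_form_def
  by (simp add: algebra_simps sum.distrib sum_subtractf sum_distrib_left)

lemma density_matrices_convex_comb:
  assumes "Y0 \<in> density_matrices V" "Y \<in> density_matrices V" "0 \<le> t" "t \<le> 1"
  shows "(\<lambda>ij. (1 - t) * Y0 ij + t * Y ij) \<in> density_matrices V"
proof -
  have "\<bar>(1 - t) * Y0 ij + t * Y ij\<bar> \<le> 1" for ij
  proof -
    have "\<bar>Y0 ij\<bar> \<le> 1" "\<bar>Y ij\<bar> \<le> 1"
      using assms(1,2) unfolding density_matrices_def by blast+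
    then show ?thesis using assms(3,4) convexD[OF convex_cball, of "Y0 ij" 0 1 "Y ij" "1 - t" t]
      by simp
  qed
  moreover have "psd_on V (curry (\<lambda>ij. (1 - t) * Y0 ij + t * Y ij))"
    using assms unfolding density_matrices_def psd_on_def curry_def
    by (simp add: quad_form_convex_comb)
  moreover have "(\<Sum>i\<in>V. (1 - t) * Y0 (i, i) + t * Y (i, i)) = 1"
    using assms by (simp add: density_matrices_def sum.distrib sum_distrib_left[symmetric])
  moreover have "(1 - t) * Y0 (i, j) + t * Y (i, j) = 0" if "i \<notin> V \<or> j \<notin> V" for i j
  proof -
    have "Y0 (i, j) = 0" "Y (i, j) = 0"
      using assms(1,2) that unfolding density_matrices_def by blast+
    then show ?thesis by simp
  qed
  ultimately show ?thesis
    unfolding density_matrices_def by blast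
qed

lemma rank_one_density_matrix:
  assumes "finite V" "0 < (\<Sum>i\<in>V. (z i)\<^sup>2)"
  shows "(\<lambda>(i, j). if i \<in> V \<and> j \<in> V then z i * z j / (\<Sum>k\<in>V. (z k)\<^sup>2) else 0)
           \<in> density_matrices V"
proof -
  define N where "N = (\<Sum>k\<in>V. (z k)\<^sup>2)"
  have N: "0 < N" using assms(2) by (simp add: N_def)
  have "\<bar>z i * z j\<bar> \<le> N" if "i \<in> V" "j \<in> V" for i j
  proof -
    have "2 * \<bar>z i * z j\<bar> \<le> (z i)\<^sup>2 + (z j)\<^sup>2"
      using sum_squares_bound[of "\<bar>z i\<bar>" "\<bar>z j\<bar>"] by (simp add: abs_mult power2_abs)
    moreover have "(z i)\<^sup>2 \<le> N" "(z j)\<^sup>2 \<le> N"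
      unfolding N_def using that assms(1) by (auto intro: member_le_sum)
    ultimately show ?thesis by linarith
  qed
  then have box: "\<bar>z i * z j / N\<bar> \<le> 1" if "i \<in> V" "j \<in> V" for i j
    using that N by (simp add: abs_divide)
  have "quad_form V (\<lambda>i j. if i \<in> V \<and> j \<in> V then z i * z j / N else 0) w
      = (\<Sum>i\<in>V. w i * z i)\<^sup>2 / N" for w
    unfolding quad_form_def
    by (simp add: power2_eq_square sum_product sum_divide_distrib mult_ac)
  moreover have "(\<Sum>i\<in>V. z i * z i / N) = 1"
    using N by (simp add: N_def power2_eq_square sum_divide_distrib[symmetric])
  ultimately show ?thesis
    using box N unfolding N_def[symmetric]
    by (auto simp: density_matrices_def psd_on_def curry_def mult.commute)
qed

lemma scaled_identity_density_matrix:
  assumes "finite V" "V \<noteq> {}"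
  shows "(\<lambda>(i, j). if i \<in> V \<and> j = i then 1 / real (card V) else 0) \<in> density_matrices V"
proof -
  have n: "1 \<le> real (card V)" using assms by (simp add: Suc_le_eq card_gt_0_iff)
  have "quad_form V (\<lambda>i j. if i \<in> V \<and> j = i then 1 / real (card V) else 0) z
      = (\<Sum>i\<in>V. (z i)\<^sup>2 / real (card V))" for z
    unfolding quad_form_def using assms(1)
    by (intro sum.cong) (auto simp: power2_eq_square if_distrib cong: if_cong)
  then show ?thesis
    using n by (auto simp: density_matrices_def psd_on_def curry_def sum_nonneg)
qed

section \<open>Semidefinite duality by penalisation\<close>

definition theta_obj :: "'a set \<Rightarrow> ('a \<Rightarrow> real) \<Rightarrow> ('a \<times> 'a \<Rightarrow> real) \<Rightarrow> real" where
  "theta_obj V p Y = (\<Sum>i\<in>V. \<Sum>j\<in>V. sqrt (p i) * sqrt (p j) * Y (i, j))"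

definition theta_feasible :: "'a set \<Rightarrow> ('a \<Rightarrow> 'a \<Rightarrow> bool) \<Rightarrow> ('a \<times> 'a \<Rightarrow> real) set" where
  "theta_feasible V E =
     {Y \<in> density_matrices V. \<forall>i j. compl_edges V E i j \<longrightarrow> Y (i, j) = 0}"

text \<open>The diagonal \<open>penalty_pairing V E p c Y Y\<close> is the penalty minimised below; it vanishes
  exactly at the feasible \<open>Y\<close> with \<open>theta_obj V p Y = c\<close>.\<close>
definition penalty_pairing ::
  "'a set \<Rightarrow> ('a \<Rightarrow> 'a \<Rightarrow> bool) \<Rightarrow> ('a \<Rightarrow> real) \<Rightarrow> real \<Rightarrow> ('a \<times> 'a \<Rightarrow> real) \<Rightarrow> ('a \<times> 'a \<Rightarrow> real) \<Rightarrow> real"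
  where "penalty_pairing V E p c Y0 Y =
    (\<Sum>i\<in>V. \<Sum>j\<in>V. of_bool (compl_edges V E i j) * Y0 (i, j) * Y (i, j))
    + (theta_obj V p Y0 - c) * (theta_obj V p Y - c)"

lemma penalty_pairing_convex_comb:
  "\<exists>R. \<forall>t. penalty_pairing V E p c
        (\<lambda>ij. (1 - t) * Y0 ij + t * Y ij) (\<lambda>ij. (1 - t) * Y0 ij + t * Y ij)
      = penalty_pairing V E p c Y0 Y0
        + 2 * t * (penalty_pairing V E p c Y0 Y - penalty_pairing V E p c Y0 Y0) + t\<^sup>2 * R"
proof -
  define w where "w i j = (of_bool (compl_edges V E i j) :: real)" for i j
  define pair where "pair A B = (\<Sum>i\<in>V. \<Sum>j\<in>V. w i j * A (i, j) * B (i, j))"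
    for A B :: "'a \<times> 'a \<Rightarrow> real"
  define D where "D ij = Y ij - Y0 ij" for ij
  have P: "penalty_pairing V E p c A B = pair A B + (theta_obj V p A - c) * (theta_obj V p B - c)"
    for A B
    by (simp add: penalty_pairing_def pair_def w_def)
  have theta: "theta_obj V p (\<lambda>ij. (1 - t) * Y0 ij + t * Y ij)
      = (1 - t) * theta_obj V p Y0 + t * theta_obj V p Y" for t
    unfolding theta_obj_def by (simp add: algebra_simps sum.distrib sum_subtractf sum_distrib_left)
  have pair_comb: "pair (\<lambda>ij. (1 - t) * Y0 ij + t * Y ij) (\<lambda>ij. (1 - t) * Y0 ij + t * Y ij)
      = pair Y0 Y0 + 2 * t * (pair Y0 Y - pair Y0 Y0) + t\<^sup>2 * pair D D" for t
    unfolding pair_def D_def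
    by (simp add: algebra_simps power2_eq_square sum.distrib sum_subtractf sum_distrib_left)
  show ?thesis
    unfolding P theta pair_comb
    by (intro exI[of _ "pair D D + (theta_obj V p Y - theta_obj V p Y0)\<^sup>2"] allI) algebra
qed

lemma nonneg_if_quadratic_nonneg_near_0:
  fixes g R :: real
  assumes "\<And>t. 0 < t \<Longrightarrow> t \<le> 1 \<Longrightarrow> 0 \<le> 2 * t * g + t\<^sup>2 * R"
  shows "0 \<le> g"
proof (rule ccontr)
  assume "\<not> 0 \<le> g"
  define t where "t = min 1 (- g / (\<bar>R\<bar> + 1))"
  have "0 < - g / (\<bar>R\<bar> + 1)" using \<open>\<not> 0 \<le> g\<close> by (intro divide_pos_pos) auto
  then have t: "0 < t" "t \<le> 1" by (auto simp: t_def)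
  have "t * \<bar>R\<bar> \<le> - g / (\<bar>R\<bar> + 1) * \<bar>R\<bar>"
    by (intro mult_right_mono) (auto simp: t_def)
  also have "\<dots> < - g" using \<open>\<not> 0 \<le> g\<close> by (simp add: field_simps)
  finally have "t * R < - g"
    using mult_left_mono[OF abs_ge_self, of t R] t by linarith
  then have "t * (t * R) < t * (- g)"
    using t by (intro mult_strict_left_mono)
  then have "2 * t * g + t\<^sup>2 * R < t * g"
    by (simp add: power2_eq_square algebra_simps)
  also have "t * g < 0" using t \<open>\<not> 0 \<le> g\<close> by (simp add: mult_pos_neg)
  finally show False using assms[OF t] by simp
qed

lemma penalty_minimizer_variational:
  fixes V :: "'a set" and E p c
  defines "P \<equiv> penalty_pairing V E p c"
  assumes Y0: "Y0 \<in> density_matrices V" and min: "\<And>Y. Y \<in> density_matrices V \<Longrightarrow> P Y0 Y0 \<le> P Y Y"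
    and Y: "Y \<in> density_matrices V"
  shows "P Y0 Y0 \<le> P Y0 Y"
proof -
  obtain R where R: "\<And>t. P (\<lambda>ij. (1 - t) * Y0 ij + t * Y ij) (\<lambda>ij. (1 - t) * Y0 ij + t * Y ij)
      = P Y0 Y0 + 2 * t * (P Y0 Y - P Y0 Y0) + t\<^sup>2 * R"
    using penalty_pairing_convex_comb[of V E p c Y0 Y] unfolding P_def by blast
  have "0 \<le> P Y0 Y - P Y0 Y0"
  proof (rule nonneg_if_quadratic_nonneg_near_0)
    fix t :: real assume "0 < t" "t \<le> 1"
    then have "P Y0 Y0 \<le> P (\<lambda>ij. (1 - t) * Y0 ij + t * Y ij) (\<lambda>ij. (1 - t) * Y0 ij + t * Y ij)"
      using min density_matrices_convex_comb[OF Y0 Y] by simp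
    then show "0 \<le> 2 * t * (P Y0 Y - P Y0 Y0) + t\<^sup>2 * R" unfolding R by simp
  qed
  then show ?thesis by simp
qed

lemma quad_form_certificate:
  fixes V :: "'a set" and E :: "'a \<Rightarrow> 'a \<Rightarrow> bool" and Y0 :: "'a \<times> 'a \<Rightarrow> real"
    and c :: real and p z :: "'a \<Rightarrow> real"
  defines "\<beta> \<equiv> c - theta_obj V p Y0" and "N \<equiv> \<Sum>k\<in>V. (z k)\<^sup>2"
  defines "M \<equiv> \<lambda>i j. (if i = j then c else 0) - sqrt (p i) * sqrt (p j)
                    + of_bool (compl_edges V E i j) * Y0 (i, j) / \<beta>"
    and "Y \<equiv> \<lambda>(i, j). if i \<in> V \<and> j \<in> V then z i * z j / N else 0"
  assumes fin: "finite V" and N: "0 < N" and \<beta>: "\<beta> \<noteq> 0"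
  shows "\<beta> * quad_form V M z = N * penalty_pairing V E p c Y0 Y"
proof -
  define P where "P = (\<Sum>i\<in>V. sqrt (p i) * z i)\<^sup>2"
  define T where "T = (\<Sum>i\<in>V. \<Sum>j\<in>V. of_bool (compl_edges V E i j) * Y0 (i, j) * (z i * z j))"
  have diag: "(\<Sum>i\<in>V. \<Sum>j\<in>V. z i * z j * (if i = j then c else 0)) = c * N"
    using fin
    by (simp add: N_def power2_eq_square sum_distrib_left if_distrib mult_ac cong: if_cong)
  have "quad_form V M z
      = (\<Sum>i\<in>V. \<Sum>j\<in>V. z i * z j * (if i = j then c else 0))
        - (\<Sum>i\<in>V. \<Sum>j\<in>V. (sqrt (p i) * z i) * (sqrt (p j) * z j)) + T / \<beta>"
    unfolding quad_form_def T_def M_def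
    by (simp add: algebra_simps sum_subtractf sum.distrib sum_divide_distrib)
  also have "\<dots> = c * N - P + T / \<beta>"
    unfolding diag P_def by (simp add: power2_eq_square sum_product)
  finally have quad: "quad_form V M z = c * N - P + T / \<beta>" .
  have th: "theta_obj V p Y = P / N"
    unfolding theta_obj_def P_def Y_def
    by (simp add: power2_eq_square sum_product sum_divide_distrib mult_ac)
  have sw: "(\<Sum>i\<in>V. \<Sum>j\<in>V. of_bool (compl_edges V E i j) * Y0 (i, j) * Y (i, j)) = T / N"
    unfolding T_def Y_def by (simp add: sum_divide_distrib mult_ac)
  have th0: "theta_obj V p Y0 = c - \<beta>" by (simp add: \<beta>_def)
  have "penalty_pairing V E p c Y0 Y = T / N - \<beta> * (P / N - c)"
    unfolding penalty_pairing_def th sw th0 by (simp add: algebra_simps)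
  then have "N * penalty_pairing V E p c Y0 Y = T - \<beta> * P + \<beta> * c * N"
    using N by (simp add: field_simps)
  moreover have "\<beta> * (c * N - P + T / \<beta>) = T - \<beta> * P + \<beta> * c * N"
    using \<beta> by (simp add: field_simps)
  ultimately show ?thesis unfolding quad by simp
qed

lemma penalty_pairing_self_pos:
  assumes "finite V" "Y \<in> density_matrices V"
    and feasible_below: "Y \<in> theta_feasible V E \<Longrightarrow> theta_obj V p Y < c"
  shows "0 < penalty_pairing V E p c Y Y"
proof (rule ccontr)
  define S where "S = (\<Sum>i\<in>V. \<Sum>j\<in>V. of_bool (compl_edges V E i j) * Y (i, j) * Y (i, j))"
  have S: "0 \<le> S" unfolding S_def by (intro sum_nonneg) auto
  assume "\<not> 0 < penalty_pairing V E p c Y Y"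
  then have "S + (theta_obj V p Y - c)\<^sup>2 \<le> 0"
    by (simp add: penalty_pairing_def S_def power2_eq_square)
  then have "S = 0" and "(theta_obj V p Y - c)\<^sup>2 = 0"
    using S zero_le_power2[of "theta_obj V p Y - c"] by linarith+
  then have theta: "theta_obj V p Y = c" by simp
  have "of_bool (compl_edges V E i j) * Y (i, j) * Y (i, j) = 0" if "i \<in> V" "j \<in> V" for i j
    using \<open>S = 0\<close> that assms(1)
    by (simp add: S_def sum_nonneg_eq_0_iff sum_nonneg)
  then have "Y \<in> theta_feasible V E"
    using assms(2) by (auto simp: theta_feasible_def compl_edges_def)
  with theta feasible_below show False by simp
qed

lemma penalty_minimizer_exists:
  assumes "finite V" "V \<noteq> {}"
  shows "\<exists>Y0\<in>density_matrices V. \<forall>Y\<in>density_matrices V.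
           penalty_pairing V E p c Y0 Y0 \<le> penalty_pairing V E p c Y Y"
proof -
  have "continuous_on UNIV (\<lambda>Y. penalty_pairing V E p c Y Y)"
    unfolding penalty_pairing_def theta_obj_def
    by (intro continuous_intros continuous_on_product_coordinates)
  then have "continuous_on (density_matrices V) (\<lambda>Y. penalty_pairing V E p c Y Y)"
    by (rule continuous_on_subset) simp
  moreover have "density_matrices V \<noteq> {}"
    using scaled_identity_density_matrix[OF assms] by blast
  ultimately show ?thesis
    using continuous_attains_inf[OF compact_density_matrices] by blast
qed

text \<open>Test the optimality condition against the scaled identity, which is feasible and has
  no entries on non-edges.\<close>
lemma penalty_minimizer_theta_less:
  assumes "finite V" "V \<noteq> {}" "1 < c"
    and bounded: "\<forall>Y\<in>theta_feasible V E. theta_obj V p Y \<le> 1"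
    and Y0: "Y0 \<in> density_matrices V"
    and min: "\<And>Y. Y \<in> density_matrices V
      \<Longrightarrow> penalty_pairing V E p c Y0 Y0 \<le> penalty_pairing V E p c Y Y"
  shows "theta_obj V p Y0 < c"
proof -
  let ?P = "penalty_pairing V E p c"
  define I where "I = (\<lambda>(i, j). if i \<in> V \<and> j = i then 1 / real (card V) else 0)"
  have I: "I \<in> density_matrices V"
    unfolding I_def by (rule scaled_identity_density_matrix[OF assms(1,2)])
  then have "I \<in> theta_feasible V E"
    by (auto simp: theta_feasible_def I_def compl_edges_def)
  then have "theta_obj V p I - c < 0" using bounded assms(3) by force
  moreover have "(\<Sum>i\<in>V. \<Sum>j\<in>V. of_bool (compl_edges V E i j) * Y0 (i, j) * I (i, j)) = 0"
    by (intro sum.neutral ballI) (simp add: I_def compl_edges_def)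
  then have "?P Y0 I = (theta_obj V p Y0 - c) * (theta_obj V p I - c)"
    by (simp add: penalty_pairing_def)
  moreover have "0 < ?P Y0 Y0"
    using penalty_pairing_self_pos[OF assms(1) Y0] bounded assms(3) by force
  then have "0 < ?P Y0 I"
    using penalty_minimizer_variational[OF Y0 min I] by linarith
  ultimately show ?thesis by (simp add: zero_less_mult_iff)
qed

text \<open>The optimality condition at a minimiser \<open>Y0\<close>, tested on the rank-one density matrices,
  says exactly that this matrix is positive semidefinite.\<close>
lemma penalty_minimizer_certificate_nonneg:
  assumes "finite V" and Y0: "Y0 \<in> density_matrices V"
    and min: "\<And>Y. Y \<in> density_matrices V
      \<Longrightarrow> penalty_pairing V E p c Y0 Y0 \<le> penalty_pairing V E p c Y Y"
    and pos: "0 < penalty_pairing V E p c Y0 Y0" and less: "theta_obj V p Y0 < c"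
  shows "0 \<le> quad_form V (\<lambda>i j. (if i = j then c else 0) - sqrt (p i) * sqrt (p j)
             + of_bool (compl_edges V E i j) * Y0 (i, j) / (c - theta_obj V p Y0)) z"
    (is "0 \<le> quad_form V ?M z")
proof (cases "(\<Sum>k\<in>V. (z k)\<^sup>2) = 0")
  case True
  then have "\<forall>k\<in>V. z k = 0" using assms(1) by (simp add: sum_nonneg_eq_0_iff)
  then show ?thesis by (simp add: quad_form_def)
next
  case False
  then have N: "0 < (\<Sum>k\<in>V. (z k)\<^sup>2)" by (simp add: order_less_le sum_nonneg)
  let ?Yz = "\<lambda>(i, j). if i \<in> V \<and> j \<in> V then z i * z j / (\<Sum>k\<in>V. (z k)\<^sup>2) else 0"
  have "0 < (\<Sum>k\<in>V. (z k)\<^sup>2) * penalty_pairing V E p c Y0 Y0" using N pos by simp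
  also have "\<dots> \<le> (\<Sum>k\<in>V. (z k)\<^sup>2) * penalty_pairing V E p c Y0 ?Yz"
    using N penalty_minimizer_variational[OF Y0 min rank_one_density_matrix[OF assms(1) N]]
    by (simp add: mult_left_mono)
  also have "\<dots> = (c - theta_obj V p Y0) * quad_form V ?M z"
    using quad_form_certificate[OF assms(1) N] less by simp
  finally show ?thesis using less by (simp add: zero_less_mult_iff)
qed

lemma theta_bounded_certificate:
  assumes G: "simple_graph V E" and "V \<noteq> {}" "0 < \<epsilon>" and p: "\<forall>i\<in>V. 0 \<le> p i"
    and bounded: "\<forall>Y\<in>theta_feasible V E. theta_obj V p Y \<le> 1"
  shows "\<exists>M. psd_on V M \<and> (\<forall>i\<in>V. M i i = 1 + \<epsilon> - p i)
           \<and> (\<forall>i\<in>V. \<forall>j\<in>V. E i j \<longrightarrow> M i j = - (sqrt (p i) * sqrt (p j)))"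
proof -
  have fin: "finite V" using G by (simp add: simple_graph_def)
  define c where "c = 1 + \<epsilon>"
  have "1 < c" using assms(3) by (simp add: c_def)
  obtain Y0 where Y0: "Y0 \<in> density_matrices V"
    and min: "\<And>Y. Y \<in> density_matrices V
      \<Longrightarrow> penalty_pairing V E p c Y0 Y0 \<le> penalty_pairing V E p c Y Y"
    using penalty_minimizer_exists[OF fin assms(2)] by blast
  have less: "theta_obj V p Y0 < c"
    using penalty_minimizer_theta_less[OF fin assms(2) \<open>1 < c\<close> bounded Y0 min] .
  have pos: "0 < penalty_pairing V E p c Y0 Y0"
    using penalty_pairing_self_pos[OF fin Y0] bounded \<open>1 < c\<close> by force
  define M where "M i j = (if i = j then c else 0) - sqrt (p i) * sqrt (p j)
      + of_bool (compl_edges V E i j) * Y0 (i, j) / (c - theta_obj V p Y0)" for i j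
  have "0 \<le> quad_form V M z" for z
    unfolding M_def by (rule penalty_minimizer_certificate_nonneg[OF fin Y0 min pos less])
  moreover have "M i j = M j i" for i j
  proof -
    have "Y0 (i, j) = Y0 (j, i)" using Y0 by (simp add: density_matrices_def psd_on_def)
    moreover have "compl_edges V E i j = compl_edges V E j i"
      using G by (auto simp: compl_edges_def simple_graph_def)
    ultimately show ?thesis by (simp add: M_def mult.commute)
  qed
  moreover have "M i i = 1 + \<epsilon> - p i" if "i \<in> V" for i
    using p that by (simp add: M_def c_def compl_edges_def)
  moreover have "M i j = - (sqrt (p i) * sqrt (p j))" if "E i j" for i j
    using G that by (auto simp: M_def compl_edges_def simple_graph_def)
  ultimately show ?thesis unfolding psd_on_def by blast
qed

section \<open>Self-consistency when theta is at most one\<close>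

lemma inner_on_insert_None:
  assumes "finite V"
  shows "inner_on (insert None (Some ` V)) f g = f None * g None + inner_on V (f \<circ> Some) (g \<circ> Some)"
  using assms by (simp add: inner_on_def sum.reindex)

lemma prod_list_map_divide:
  "prod_list (map (\<lambda>x. f x / k) xs) = prod_list (map f xs) / (k :: real) ^ length xs"
  by (induction xs) auto

lemma le_1_if_le_1_plus_power:
  fixes S :: real
  assumes le: "\<And>\<epsilon>. 0 < \<epsilon> \<Longrightarrow> S \<le> (1 + \<epsilon>) ^ n"
  shows "S \<le> 1"
proof (rule ccontr)
  assume "\<not> S \<le> 1"
  then have S: "1 < S" by simp
  then have n: "0 < n" using le[of 1] by (cases n) auto
  define r where "r = root n S"
  have r: "1 < r" "r ^ n = S" unfolding r_def using n S by simp_all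
  have "(1 + (r - 1) / 2) ^ n < r ^ n"
    using r n by (intro power_strict_mono) (auto simp: field_simps)
  with le[of "(r - 1) / 2"] r show False by simp
qed

text \<open>Appending the coordinate \<open>sqrt (p i)\<close> to a Gram factorisation of the certificate
  gives vectors of squared norm \<open>1 + \<epsilon>\<close> that are orthogonal along the edges of \<open>G\<close>.\<close>
lemma certificate_orth_rep:
  assumes fin: "finite V" and "0 < \<epsilon>" and p: "\<forall>i\<in>V. 0 \<le> p i"
    and M: "psd_on V M" "\<forall>i\<in>V. M i i = 1 + \<epsilon> - p i"
      "\<forall>i\<in>V. \<forall>j\<in>V. E i j \<longrightarrow> M i j = - (sqrt (p i) * sqrt (p j))"
  defines "D \<equiv> insert None (Some ` V)"
  shows "\<exists>u c. orth_rep D V E u \<and> inner_on D c c \<le> 1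
           \<and> (\<forall>i\<in>V. (inner_on D c (u i))\<^sup>2 = p i / (1 + \<epsilon>))"
proof -
  obtain x where x: "\<forall>i\<in>V. \<forall>j\<in>V. M i j = inner_on V (x i) (x j)"
    using psd_on_gram_factorization[OF fin M(1)] by blast
  define u0 where "u0 i w = (case w of None \<Rightarrow> sqrt (p i) | Some k \<Rightarrow> x i k)" for i w
  define u where "u i = (\<lambda>w. u0 i w / sqrt (1 + \<epsilon>))" for i
  define c :: "'a option \<Rightarrow> real" where "c w = of_bool (w = None)" for w
  have "inner_on D (u i) (u j) = (sqrt (p i) * sqrt (p j) + M i j) / (1 + \<epsilon>)"
    if "i \<in> V" "j \<in> V" for i j
  proof -
    have "inner_on D (u0 i) (u0 j) = sqrt (p i) * sqrt (p j) + M i j"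
      using x that fin by (simp add: D_def inner_on_insert_None u0_def comp_def)
    then show ?thesis
      using \<open>0 < \<epsilon>\<close> by (simp add: u_def inner_on_divide)
  qed
  then have "orth_rep D V E u"
    using M(2,3) p \<open>0 < \<epsilon>\<close> by (simp add: orth_rep_def)
  moreover have "inner_on D c c \<le> 1"
    using fin by (simp add: D_def inner_on_insert_None c_def comp_def inner_on_def)
  moreover have "(inner_on D c (u i))\<^sup>2 = p i / (1 + \<epsilon>)" if "i \<in> V" for i
    using fin p that \<open>0 < \<epsilon>\<close>
    by (simp add: D_def inner_on_insert_None c_def u_def u0_def comp_def power_divide)
      (simp add: inner_on_def power_divide)
  ultimately show ?thesis by blast
qed

lemma clique_sum_le_of_certificate:
  assumes G: "simple_graph V E" and "0 < \<epsilon>" and p: "\<forall>i\<in>V. 0 \<le> p i"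
    and M: "psd_on V M" "\<forall>i\<in>V. M i i = 1 + \<epsilon> - p i"
      "\<forall>i\<in>V. \<forall>j\<in>V. E i j \<longrightarrow> M i j = - (sqrt (p i) * sqrt (p j))"
    and L: "is_clique_or_pow V E n L"
  shows "(\<Sum>xs\<in>L. prod_list (map p xs)) \<le> (1 + \<epsilon>) ^ n"
proof -
  have fin: "finite V" using G by (simp add: simple_graph_def)
  obtain u and c :: "'a option \<Rightarrow> real"
    where u: "orth_rep (insert None (Some ` V)) V E u"
      and c: "inner_on (insert None (Some ` V)) c c \<le> 1"
      and proj: "\<forall>i\<in>V. (inner_on (insert None (Some ` V)) c (u i))\<^sup>2 = p i / (1 + \<epsilon>)"
    using certificate_orth_rep[OF fin \<open>0 < \<epsilon>\<close> p M] by blast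
  have "prod_list (map (\<lambda>i. (inner_on (insert None (Some ` V)) c (u i))\<^sup>2) xs)
      = prod_list (map p xs) / (1 + \<epsilon>) ^ n" if "xs \<in> L" for xs
  proof -
    have xs: "length xs = n" "set xs \<subseteq> V"
      using L that by (auto simp: is_clique_or_pow_def or_pow_vertices_def)
    then have "prod_list (map (\<lambda>i. (inner_on (insert None (Some ` V)) c (u i))\<^sup>2) xs)
        = prod_list (map (\<lambda>i. p i / (1 + \<epsilon>)) xs)"
      using proj by (intro arg_cong[where f = prod_list] map_cong) auto
    also have "\<dots> = prod_list (map p xs) / (1 + \<epsilon>) ^ n"
      by (simp only: prod_list_map_divide xs(1))
    finally show ?thesis .
  qed
  then show ?thesis
    using orth_rep_clique_bound[OF fin u c L] \<open>0 < \<epsilon>\<close>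
    by (simp add: sum_divide_distrib[symmetric] divide_le_eq)
qed

lemma self_consistent_if_theta_bounded:
  assumes G: "simple_graph V E" and p: "prob_assignment V E p"
    and bounded: "\<forall>Y\<in>theta_feasible V E. theta_obj V p Y \<le> 1"
  shows "self_consistent V E p"
proof -
  have p_nonneg: "\<forall>i\<in>V. 0 \<le> p i" using p by (simp add: prob_assignment_def)
  have "(\<Sum>xs\<in>L. prod_list (map p xs)) \<le> 1" if "1 \<le> n" "is_clique_or_pow V E n L" for n L
  proof (cases "V = {}")
    case True
    then have "L = {}"
      using that by (auto simp: is_clique_or_pow_def or_pow_vertices_def)
    then show ?thesis by simp
  next
    case False
    show ?thesis
    proof (rule le_1_if_le_1_plus_power)
      fix \<epsilon> :: real assume "0 < \<epsilon>"
      then obtain M where "psd_on V M" "\<forall>i\<in>V. M i i = 1 + \<epsilon> - p i"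
        "\<forall>i\<in>V. \<forall>j\<in>V. E i j \<longrightarrow> M i j = - (sqrt (p i) * sqrt (p j))"
        using theta_bounded_certificate[OF G False _ p_nonneg bounded] by blast
      then show "(\<Sum>xs\<in>L. prod_list (map p xs)) \<le> (1 + \<epsilon>) ^ n"
        using clique_sum_le_of_certificate[OF G \<open>0 < \<epsilon>\<close> p_nonneg] that(2) by blast
    qed
  qed
  then show ?thesis using p by (simp add: self_consistent_def)
qed

section \<open>Inconsistency when theta exceeds one\<close>

definition normalize_on :: "'d set \<Rightarrow> ('d \<Rightarrow> real) \<Rightarrow> 'd \<Rightarrow> real" where
  "normalize_on D x = (\<lambda>d. x d / sqrt (inner_on D x x))"

lemma inner_on_normalize_on:
  "inner_on D (normalize_on D x) (normalize_on D y)
     = inner_on D x y / (sqrt (inner_on D x x) * sqrt (inner_on D y y))"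
  by (simp add: normalize_on_def inner_on_divide)

lemma inner_on_normalize_on_self_le_1: "inner_on D (normalize_on D x) (normalize_on D x) \<le> 1"
  using inner_on_self_nonneg[of D x] by (simp add: inner_on_normalize_on)

lemma inner_on_eq_sqrt_mult_normalize_on:
  assumes "finite D"
  shows "inner_on D c x = sqrt (inner_on D x x) * inner_on D c (normalize_on D x)"
proof (cases "inner_on D x x = 0")
  case True
  then have "\<forall>d\<in>D. x d = 0" using assms by (simp add: inner_on_self_eq_0_iff)
  then show ?thesis by (simp add: inner_on_def)
next
  case False
  then show ?thesis
    by (simp add: inner_on_def normalize_on_def sum_divide_distrib[symmetric] mult_ac)
qed

lemma inner_on_sum_scaled:
  assumes "\<forall>i\<in>V. \<forall>j\<in>V. Y i j = inner_on D (x i) (x j)"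
  shows "inner_on D (\<lambda>d. \<Sum>i\<in>V. a i * x i d) (\<lambda>d. \<Sum>i\<in>V. a i * x i d)
           = (\<Sum>i\<in>V. \<Sum>j\<in>V. a i * a j * Y i j)"
proof -
  have "inner_on D (\<lambda>d. \<Sum>i\<in>V. a i * x i d) (\<lambda>d. \<Sum>i\<in>V. a i * x i d)
      = (\<Sum>d\<in>D. \<Sum>i\<in>V. \<Sum>j\<in>V. a i * a j * (x i d * x j d))"
    unfolding inner_on_def sum_product by (simp add: mult_ac)
  also have "\<dots> = (\<Sum>i\<in>V. \<Sum>d\<in>D. \<Sum>j\<in>V. a i * a j * (x i d * x j d))"
    by (rule sum.swap)
  also have "\<dots> = (\<Sum>i\<in>V. \<Sum>j\<in>V. \<Sum>d\<in>D. a i * a j * (x i d * x j d))"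
    by (rule sum.cong[OF refl], rule sum.swap)
  also have "\<dots> = (\<Sum>i\<in>V. \<Sum>j\<in>V. a i * a j * Y i j)"
    using assms by (simp add: inner_on_def sum_distrib_left)
  finally show ?thesis .
qed

text \<open>Cauchy--Schwarz, applied to the unit vectors in the directions of the \<open>x i\<close>.\<close>
lemma inner_on_weighted_sum_le:
  assumes "finite V" "finite D" "\<forall>i\<in>V. 0 \<le> p i" "(\<Sum>i\<in>V. inner_on D (x i) (x i)) = 1"
  shows "(inner_on D c (\<lambda>d. \<Sum>i\<in>V. sqrt (p i) * x i d))\<^sup>2
           \<le> (\<Sum>i\<in>V. p i * (inner_on D c (normalize_on D (x i)))\<^sup>2)"
proof -
  let ?a = "\<lambda>i. sqrt (p i) * inner_on D c (normalize_on D (x i))"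
  let ?n = "\<lambda>i. sqrt (inner_on D (x i) (x i))"
  have "inner_on D c (\<lambda>d. \<Sum>i\<in>V. sqrt (p i) * x i d) = (\<Sum>d\<in>D. \<Sum>i\<in>V. sqrt (p i) * (c d * x i d))"
    by (simp add: inner_on_def sum_distrib_left mult_ac)
  also have "\<dots> = (\<Sum>i\<in>V. \<Sum>d\<in>D. sqrt (p i) * (c d * x i d))"
    by (rule sum.swap)
  also have "\<dots> = (\<Sum>i\<in>V. sqrt (p i) * inner_on D c (x i))"
    by (simp add: inner_on_def sum_distrib_left)
  also have "\<dots> = (\<Sum>i\<in>V. ?a i * ?n i)"
  proof (rule sum.cong[OF refl])
    fix i
    show "sqrt (p i) * inner_on D c (x i) = ?a i * ?n i"
      using inner_on_eq_sqrt_mult_normalize_on[OF assms(2), of c "x i"] by (simp add: mult_ac)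
  qed
  finally have "(inner_on D c (\<lambda>d. \<Sum>i\<in>V. sqrt (p i) * x i d))\<^sup>2
      \<le> (\<Sum>i\<in>V. (?a i)\<^sup>2) * (\<Sum>i\<in>V. (?n i)\<^sup>2)"
    by (simp only: Cauchy_Schwarz_ineq_sum)
  also have "(\<Sum>i\<in>V. (?n i)\<^sup>2) = 1"
    using assms(4) by (simp add: inner_on_self_nonneg)
  also have "(\<Sum>i\<in>V. (?a i)\<^sup>2) = (\<Sum>i\<in>V. p i * (inner_on D c (normalize_on D (x i)))\<^sup>2)"
    using assms(3) by (intro sum.cong) (simp_all add: power_mult_distrib)
  finally show ?thesis by simp
qed

text \<open>If \<open>f\<close> maps \<open>G\<close> onto its complement, then for distinct \<open>i\<close>, \<open>j\<close> either \<open>i\<close> and \<open>j\<close> are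
  adjacent, or they are adjacent in the complement and then their preimages are adjacent.\<close>
lemma self_complementary_diagonal_clique:
  assumes f: "bij_betw f V V" and iso: "\<forall>x\<in>V. \<forall>y\<in>V. E x y \<longleftrightarrow> compl_edges V E (f x) (f y)"
  shows "is_clique_or2 V E ((\<lambda>i. (i, inv_into V f i)) ` V)"
proof -
  have h: "inv_into V f i \<in> V" "f (inv_into V f i) = i" if "i \<in> V" for i
    using f that by (auto simp: bij_betw_def inv_into_into f_inv_into_f)
  have "or_adj2 E (i, inv_into V f i) (j, inv_into V f j)" if "i \<in> V" "j \<in> V" "i \<noteq> j" for i j
  proof (cases "E i j")
    case False
    then have "compl_edges V E (f (inv_into V f i)) (f (inv_into V f j))"
      using that h by (simp add: compl_edges_def)
    then show ?thesis using iso h that by (simp add: or_adj2_def)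
  qed (simp add: or_adj2_def)
  then show ?thesis
    using h by (auto simp: is_clique_or2_def)
qed

lemma theta_large_projection_weight:
  assumes fin: "finite V" and p: "\<forall>i\<in>V. 0 \<le> p i" and Y: "Y \<in> density_matrices V"
    and x: "\<forall>i\<in>V. \<forall>j\<in>V. Y (i, j) = inner_on V (x i) (x j)"
    and large: "1 < theta_obj V p Y"
  shows "\<exists>c. inner_on V c c \<le> 1 \<and> 1 < (\<Sum>i\<in>V. p i * (inner_on V c (normalize_on V (x i)))\<^sup>2)"
proof -
  define s where "s = (\<lambda>d. \<Sum>i\<in>V. sqrt (p i) * x i d)"
  define c where "c = normalize_on V s"
  have ss: "inner_on V s s = theta_obj V p Y"
    unfolding s_def theta_obj_def using inner_on_sum_scaled[of V "curry Y" V x] x by simp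
  have "inner_on V c s = inner_on V s s / sqrt (inner_on V s s)"
    by (simp add: c_def normalize_on_def inner_on_def sum_divide_distrib mult_ac)
  then have "theta_obj V p Y = (inner_on V c s)\<^sup>2"
    using ss large by (simp add: real_div_sqrt)
  also have "\<dots> \<le> (\<Sum>i\<in>V. p i * (inner_on V c (normalize_on V (x i)))\<^sup>2)"
    unfolding s_def
  proof (rule inner_on_weighted_sum_le[OF fin fin p])
    have "(\<Sum>i\<in>V. inner_on V (x i) (x i)) = (\<Sum>i\<in>V. Y (i, i))"
      using x by simp
    then show "(\<Sum>i\<in>V. inner_on V (x i) (x i)) = 1"
      using Y by (simp add: density_matrices_def)
  qed
  finally show ?thesis
    using large inner_on_normalize_on_self_le_1[of V s] unfolding c_def by force
qed

text \<open>A Gram factorisation of \<open>Y\<close> is an orthogonal representation of the complement of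
  \<open>G\<close>; composed with an isomorphism onto the complement it becomes one of \<open>G\<close>, and the
  graph of the inverse isomorphism is the clique of \<open>G \<ast> G\<close> witnessing the inconsistency.\<close>
lemma inconsistent_if_theta_large:
  assumes G: "simple_graph V E" and sc: "self_complementary V E" and p: "\<forall>i\<in>V. 0 \<le> p i"
    and Y: "Y \<in> theta_feasible V E" and large: "1 < theta_obj V p Y"
  shows "\<exists>q. self_consistent V E q \<and> inconsistent_with V E p q"
proof -
  have fin: "finite V" using G by (simp add: simple_graph_def)
  have Y_dm: "Y \<in> density_matrices V" using Y by (simp add: theta_feasible_def)
  obtain x where x: "\<forall>i\<in>V. \<forall>j\<in>V. Y (i, j) = inner_on V (x i) (x j)"
    using psd_on_gram_factorization[OF fin, of "curry Y"] Y_dm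
    by (auto simp: density_matrices_def)
  define u where "u i = normalize_on V (x i)" for i
  obtain c where c: "inner_on V c c \<le> 1"
    and weight: "1 < (\<Sum>i\<in>V. p i * (inner_on V c (u i))\<^sup>2)"
    using theta_large_projection_weight[OF fin p Y_dm x large] unfolding u_def by blast
  obtain f where f: "bij_betw f V V"
    and iso: "\<forall>i\<in>V. \<forall>j\<in>V. E i j \<longleftrightarrow> compl_edges V E (f i) (f j)"
    using sc by (auto simp: self_complementary_def graph_iso_def)
  have fV: "f i \<in> V" if "i \<in> V" for i using f that by (simp add: bij_betw_apply)
  define q where "q j = (inner_on V c (u (f j)))\<^sup>2" for j
  have "orth_rep V V E (\<lambda>j. u (f j))"
  proof -
    have "inner_on V (x (f i)) (x (f j)) = 0" if "i \<in> V" "j \<in> V" "E i j" for i j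
    proof -
      have "compl_edges V E (f i) (f j)" using iso that by blast
      then have "Y (f i, f j) = 0" using Y by (simp add: theta_feasible_def)
      then show ?thesis using x fV that(1,2) by metis
    qed
    then show ?thesis
      by (simp add: orth_rep_def u_def inner_on_normalize_on_self_le_1)
        (simp add: inner_on_normalize_on)
  qed
  then have "self_consistent V E q"
    unfolding q_def by (rule orth_rep_self_consistent[OF G _ c])
  moreover have "inconsistent_with V E p q"
  proof -
    let ?C = "(\<lambda>i. (i, inv_into V f i)) ` V"
    have "(\<Sum>(i, j)\<in>?C. p i * q j) = (\<Sum>i\<in>V. p i * q (inv_into V f i))"
      by (subst sum.reindex) (auto simp: inj_on_def)
    also have "\<dots> = (\<Sum>i\<in>V. p i * (inner_on V c (u i))\<^sup>2)"
      using f by (intro sum.cong) (auto simp: q_def bij_betw_def f_inv_into_f)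
    finally show ?thesis
      using weight self_complementary_diagonal_clique[OF f iso]
      by (auto simp: inconsistent_with_def)
  qed
  ultimately show ?thesis by blast
qed

theorem lemma4:
  fixes V :: "'a set" and E :: "'a \<Rightarrow> 'a \<Rightarrow> bool" and p :: "'a \<Rightarrow> real"
  assumes "simple_graph V E"
    and "self_complementary V E"
    and "prob_assignment V E p"
  shows "self_consistent V E p \<or>
         (\<exists>q. self_consistent V E q \<and> inconsistent_with V E p q)"
proof (cases "\<exists>Y\<in>theta_feasible V E. 1 < theta_obj V p Y")
  case True
  moreover have "\<forall>i\<in>V. 0 \<le> p i" using assms(3) by (simp add: prob_assignment_def)
  ultimately show ?thesis using inconsistent_if_theta_large[OF assms(1,2)] by blast
next
  case False
  then show ?thesis
    using self_consistent_if_theta_bounded[OF assms(1,3)] by (auto simp: not_less)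
qed

end
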